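(* Let $\mathcal{X}\subseteq\mathcal{B}(0,R)$ be compact convex, $\mathcal{Z}$ a set and $f:\mathcal{X}\times\mathcal{Z}\to\mathbb{R}$ with $f(\cdot,z)\in\mathcal{F}^0_{\mathcal{X}}(L)$ for all $z$. Suppose $T\le n$. For sampling-with-replacement SGD $\mathcal{A}_{\sf rSGD}$ with step sizes $(\eta_t)_{t\in[T]}$ and any neighboring datasets $S\simeq S'$, $$\mathbb{E}\big[\|\mathcal{A}_{\sf rSGD}(S)-\mathcal{A}_{\sf rSGD}(S')\|\big]\le\min\Big(2R,\;3L\frac{T-1}{n}\Big(\sqrt{\sum_{t=1}^{T-1}\eta_t^2}+\frac1n\sum_{t=1}^{T-1}\eta_t\Big)\Big).$$
   Context: $\mathcal{F}^0_{\mathcal{X}}(L)$ is the class of convex $L$-Lipschitz functions on $\mathcal{X}$ (Lipschitz on an open set containing $\mathcal{X}$, so subgradients have norm at most $L$). $\mathcal{A}_{\sf rSGD}$ on $S=(z_1,\dots,z_n)$: from a fixed initial point $x^1\in\mathcal{X}$, for $t=1,\dots,T-1$ draw $\mathbf{i}_t\sim\mathrm{Unif}([n])$ independently and set $x^{t+1}=\mathsf{Proj}_{\mathcal{X}}(x^t-\eta_t\nabla f(x^t,z_{\mathbf{i}_t}))$, where $\nabla f(x,z)$ is a fixed selection of a subgradient; output $\frac{1}{\sum_t\eta_t}\sum_{t\in[T]}\eta_tx^t$. The runs on $S$ and $S'$ use the same initial point and the same indices; the expectation is over the indices. $S\simeq S'$ means the datasets differ in at most one entry. *)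

theory Defs
  imports "HOL-Analysis.Analysis"
begin

definition proj_set :: "'a::euclidean_space set \<Rightarrow> 'a \<Rightarrow> 'a" where
  "proj_set X y = (SOME p. p \<in> X \<and> (\<forall>q\<in>X. dist y p \<le> dist y q))"

text \<open>Iterates of sampling-with-replacement projected SGD.
  rsgd_iter X g \<eta> x1 S idx k is the iterate x^(k+1): x^1 = x1 and
  x^(t+1) = Proj_X (x^t - \<eta>_t * grad f(x^t, z_(idx t))), where the dataset is
  S :: nat \<Rightarrow> 'z with entries S 0, ..., S (n-1) and idx t \<in> {0..<n}.\<close>
fun rsgd_iter :: "'a::euclidean_space set \<Rightarrow> ('a \<Rightarrow> 'z \<Rightarrow> 'a) \<Rightarrow> (nat \<Rightarrow> real) \<Rightarrow> 'a
    \<Rightarrow> (nat \<Rightarrow> 'z) \<Rightarrow> (nat \<Rightarrow> nat) \<Rightarrow> nat \<Rightarrow> 'a" where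
  "rsgd_iter X g \<eta> x1 S idx 0 = x1"
| "rsgd_iter X g \<eta> x1 S idx (Suc k) =
     proj_set X (rsgd_iter X g \<eta> x1 S idx k
                 - \<eta> (Suc k) *\<^sub>R g (rsgd_iter X g \<eta> x1 S idx k) (S (idx (Suc k))))"

definition rsgd_out :: "'a::euclidean_space set \<Rightarrow> ('a \<Rightarrow> 'z \<Rightarrow> 'a) \<Rightarrow> (nat \<Rightarrow> real) \<Rightarrow> 'a
    \<Rightarrow> nat \<Rightarrow> (nat \<Rightarrow> 'z) \<Rightarrow> (nat \<Rightarrow> nat) \<Rightarrow> 'a" where
  "rsgd_out X g \<eta> x1 T S idx =
     (1 / (\<Sum>t=1..T. \<eta> t)) *\<^sub>R (\<Sum>t=1..T. \<eta> t *\<^sub>R rsgd_iter X g \<eta> x1 S idx (t - 1))"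

text \<open>Expectation over independent uniform indices idx 1, ..., idx (T-1) in {0..<n}.\<close>
definition idx_expect :: "nat \<Rightarrow> nat \<Rightarrow> ((nat \<Rightarrow> nat) \<Rightarrow> real) \<Rightarrow> real" where
  "idx_expect n T h =
     (\<Sum>idx \<in> PiE {1..<T} (\<lambda>_. {..<n}). h idx) / real n ^ (T - 1)"

definition neighbors :: "nat \<Rightarrow> (nat \<Rightarrow> 'z) \<Rightarrow> (nat \<Rightarrow> 'z) \<Rightarrow> bool" where
  "neighbors n S S' \<longleftrightarrow> card {i \<in> {..<n}. S i \<noteq> S' i} \<le> 1"

end

theory Submission
  imports Defs
begin

(* Run SGD on S and S' with the same indices and let \<delta>_k be the distance of the k-th iterates.
   Projection onto X is nonexpansive, and the subgradients are bounded by L and monotone, so a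
   step sampling an index where S and S' agree gives \<delta>_(k+1)^2 \<le> \<delta>_k^2 + (2 L \<eta>_(k+1))^2,
   while every step gives \<delta>_(k+1) \<le> \<delta>_k + 2 L \<eta>_(k+1). Hence \<delta> vanishes until the differing
   index is first sampled, after which it is at most 2 L sqrt(\<Sum> \<eta>_s^2) plus 2 L \<eta>_s for every
   later step s that samples it again. The first event has probability at most (T - 1)/n and a
   repetition at step s at most (s - 1)/n^2, which yields the bound even with the constant 2 in
   place of 3; the bound 2 R is the diameter of the ball. *)

lemma proj_set_eq_closest_point: "proj_set X = closest_point X"
  by (rule ext) (simp add: proj_set_def closest_point_def)

lemma subgradient_norm_le_lipschitz:
  fixes v x :: "'a::real_inner" and h :: "'a \<Rightarrow> real"
  assumes "open U" "x \<in> U" and lip: "L-lipschitz_on U h"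
    and subgrad: "\<forall>y\<in>U. h x + v \<bullet> (y - x) \<le> h y"
  shows "norm v \<le> L"
proof (cases "v = 0")
  case True
  then show ?thesis using lipschitz_on_nonneg[OF lip] by simp
next
  case False
  obtain e where e: "e > 0" "ball x e \<subseteq> U" using assms(1,2) openE by blast
  define y where "y = x + (e / 2 / norm v) *\<^sub>R v"
  have dist_y: "dist y x = e / 2" using False e by (simp add: y_def dist_norm)
  then have "y \<in> U" using e by (auto simp: dist_commute)
  have "v \<bullet> (y - x) = e / 2 * norm v"
    using False by (simp add: y_def power2_norm_eq_inner[symmetric] power2_eq_square)
  then have "e / 2 * norm v \<le> h y - h x" using subgrad \<open>y \<in> U\<close> by force
  also have "\<dots> \<le> L * dist y x"
    using lipschitz_onD[OF lip \<open>y \<in> U\<close> assms(2)] by (simp add: dist_real_def)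
  finally show ?thesis using e dist_y by (simp add: mult.commute)
qed

lemma subgradient_monotone:
  fixes v w x y :: "'a::real_inner" and h :: "'a \<Rightarrow> real"
  assumes "h x + v \<bullet> (y - x) \<le> h y" "h y + w \<bullet> (x - y) \<le> h x"
  shows "0 \<le> (v - w) \<bullet> (x - y)"
proof -
  have "v \<bullet> (y - x) = - (v \<bullet> (x - y))" by (simp add: inner_diff_right)
  then show ?thesis using assms by (simp add: inner_diff_left)
qed

lemma norm_gradient_steps_le:
  fixes v w x y :: "'a::real_normed_vector"
  assumes "norm v \<le> L" "norm w \<le> L" "0 \<le> e"
  shows "norm ((x - e *\<^sub>R v) - (y - e *\<^sub>R w)) \<le> norm (x - y) + 2 * L * e"
proof -
  have "norm (v - w) \<le> 2 * L" using assms norm_triangle_ineq4[of v w] by linarith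
  have "norm ((x - e *\<^sub>R v) - (y - e *\<^sub>R w)) = norm ((x - y) - e *\<^sub>R (v - w))"
    by (simp add: algebra_simps)
  also have "\<dots> \<le> norm (x - y) + norm (e *\<^sub>R (v - w))"
    by (rule norm_triangle_ineq4)
  also have "\<dots> \<le> norm (x - y) + 2 * L * e"
    using \<open>norm (v - w) \<le> 2 * L\<close> assms(3) by (simp add: mult_left_mono mult.commute)
  finally show ?thesis .
qed

lemma norm_gradient_steps_monotone_le:
  fixes v w x y :: "'a::real_inner"
  assumes "norm v \<le> L" "norm w \<le> L" "0 \<le> (v - w) \<bullet> (x - y)" "0 \<le> e"
  shows "(norm ((x - e *\<^sub>R v) - (y - e *\<^sub>R w)))\<^sup>2 \<le> (norm (x - y))\<^sup>2 + (2 * L * e)\<^sup>2"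
proof -
  have "(x - e *\<^sub>R v) - (y - e *\<^sub>R w) = (x - y) - e *\<^sub>R (v - w)"
    by (simp add: algebra_simps)
  then have expand: "(norm ((x - e *\<^sub>R v) - (y - e *\<^sub>R w)))\<^sup>2
      = (norm (x - y))\<^sup>2 - 2 * e * ((v - w) \<bullet> (x - y)) + e\<^sup>2 * (norm (v - w))\<^sup>2"
    unfolding power2_norm_eq_inner
    by (simp add: inner_diff_left inner_diff_right inner_commute algebra_simps power2_eq_square)
  have "norm (v - w) \<le> 2 * L" using assms norm_triangle_ineq4[of v w] by linarith
  then have "(norm (v - w))\<^sup>2 \<le> (2 * L)\<^sup>2" by (rule power_mono) simp
  then have "e\<^sup>2 * (norm (v - w))\<^sup>2 \<le> (2 * L * e)\<^sup>2"
    by (simp add: power_mult_distrib mult_left_mono mult.commute)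
  moreover have "0 \<le> 2 * e * ((v - w) \<bullet> (x - y))" using assms(3,4) by simp
  ultimately show ?thesis unfolding expand by linarith
qed

lemma le_sqrt_add_square_plus:
  fixes A B d d' c :: real
  assumes "0 \<le> A" "0 \<le> B" "0 \<le> d" "d \<le> sqrt A + B" "0 \<le> d'" "d'\<^sup>2 \<le> d\<^sup>2 + c\<^sup>2"
  shows "d' \<le> sqrt (A + c\<^sup>2) + B"
proof (rule power2_le_imp_le)
  have sqrt_mono: "sqrt A \<le> sqrt (A + c\<^sup>2)" by simp
  have "d\<^sup>2 \<le> (sqrt A + B)\<^sup>2" using assms by (intro power_mono) auto
  then have "d'\<^sup>2 \<le> (sqrt A + B)\<^sup>2 + c\<^sup>2" using assms by linarith
  also have "\<dots> = A + 2 * B * sqrt A + B\<^sup>2 + c\<^sup>2"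
    using assms by (simp add: power2_eq_square algebra_simps)
  also have "\<dots> \<le> (A + c\<^sup>2) + 2 * B * sqrt (A + c\<^sup>2) + B\<^sup>2"
    using mult_left_mono[OF sqrt_mono, of "2 * B"] assms by simp
  also have "\<dots> = (sqrt (A + c\<^sup>2) + B)\<^sup>2"
    using assms by (simp add: power2_eq_square algebra_simps)
  finally show "d'\<^sup>2 \<le> (sqrt (A + c\<^sup>2) + B)\<^sup>2" .
qed (use assms in simp)

definition divergence_bound :: "(nat \<Rightarrow> bool) \<Rightarrow> (nat \<Rightarrow> real) \<Rightarrow> nat \<Rightarrow> real" where
  "divergence_bound bad c k =
     of_bool (\<exists>r\<in>{1..k}. bad r) * sqrt (\<Sum>s=1..k. (c s)\<^sup>2)
     + (\<Sum>s=1..k. of_bool (bad s \<and> (\<exists>r\<in>{1..<s}. bad r)) * c s)"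

lemma divergence_bound_nonneg:
  assumes "\<forall>s\<in>{1..k}. 0 \<le> c s"
  shows "0 \<le> divergence_bound bad c k"
  unfolding divergence_bound_def using assms
  by (intro add_nonneg_nonneg sum_nonneg mult_nonneg_nonneg) (auto simp: sum_nonneg)

lemma divergence_bound_mono:
  assumes "k \<le> m" "\<forall>s\<in>{1..m}. 0 \<le> c s"
  shows "divergence_bound bad c k \<le> divergence_bound bad c m"
proof -
  have "of_bool (\<exists>r\<in>{1..k}. bad r) * sqrt (\<Sum>s=1..k. (c s)\<^sup>2)
      \<le> of_bool (\<exists>r\<in>{1..m}. bad r) * sqrt (\<Sum>s=1..m. (c s)\<^sup>2)"
    using assms(1) by (auto intro!: sum_mono2 mult_mono simp: sum_nonneg)
  moreover have "(\<Sum>s=1..k. of_bool (bad s \<and> (\<exists>r\<in>{1..<s}. bad r)) * c s)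
      \<le> (\<Sum>s=1..m. of_bool (bad s \<and> (\<exists>r\<in>{1..<s}. bad r)) * c s)"
    using assms by (intro sum_mono2) auto
  ultimately show ?thesis unfolding divergence_bound_def by linarith
qed

lemma divergence_bound_no_bad:
  assumes "\<not> (\<exists>r\<in>{1..k}. bad r)"
  shows "divergence_bound bad c k = 0"
  unfolding divergence_bound_def using assms by (auto intro!: sum.neutral)

lemma divergence_bound_Suc:
  "divergence_bound bad c (Suc k) =
     of_bool (\<exists>r\<in>{1..Suc k}. bad r) * sqrt ((\<Sum>s=1..k. (c s)\<^sup>2) + (c (Suc k))\<^sup>2)
     + (\<Sum>s=1..k. of_bool (bad s \<and> (\<exists>r\<in>{1..<s}. bad r)) * c s)
     + of_bool (bad (Suc k) \<and> (\<exists>r\<in>{1..k}. bad r)) * c (Suc k)"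
  unfolding divergence_bound_def by (simp add: atLeastLessThanSuc_atLeastAtMost)

lemma divergence_bound_step:
  assumes "0 \<le> d" "0 \<le> d'" "\<forall>s\<in>{1..Suc k}. 0 \<le> c s" "d \<le> divergence_bound bad c k"
    and good_zero: "\<not> bad (Suc k) \<Longrightarrow> d = 0 \<Longrightarrow> d' = 0"
    and good: "\<not> bad (Suc k) \<Longrightarrow> d'\<^sup>2 \<le> d\<^sup>2 + (c (Suc k))\<^sup>2"
    and any: "d' \<le> d + c (Suc k)"
  shows "d' \<le> divergence_bound bad c (Suc k)"
proof -
  define A where "A = (\<Sum>s=1..k. (c s)\<^sup>2)"
  define B where "B = (\<Sum>s=1..k. of_bool (bad s \<and> (\<exists>r\<in>{1..<s}. bad r)) * c s)"
  have "0 \<le> A" unfolding A_def by (simp add: sum_nonneg)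
  have "0 \<le> B" unfolding B_def using assms(3) by (intro sum_nonneg) auto
  have bound_Suc: "divergence_bound bad c (Suc k) =
      of_bool (\<exists>r\<in>{1..Suc k}. bad r) * sqrt (A + (c (Suc k))\<^sup>2) + B
      + of_bool (bad (Suc k) \<and> (\<exists>r\<in>{1..k}. bad r)) * c (Suc k)"
    unfolding divergence_bound_Suc A_def B_def ..
  show ?thesis
  proof (cases "\<exists>r\<in>{1..k}. bad r")
    case True
    then have IH: "d \<le> sqrt A + B" and "\<exists>r\<in>{1..Suc k}. bad r"
      using assms(4) by (auto simp: divergence_bound_def A_def B_def)
    have "sqrt A \<le> sqrt (A + (c (Suc k))\<^sup>2)" by simp
    then have "d' \<le> sqrt (A + (c (Suc k))\<^sup>2) + B + c (Suc k)" using any IH by linarith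
    moreover have "\<not> bad (Suc k) \<Longrightarrow> d' \<le> sqrt (A + (c (Suc k))\<^sup>2) + B"
      using le_sqrt_add_square_plus \<open>0 \<le> A\<close> \<open>0 \<le> B\<close> assms(1,2) IH good by blast
    ultimately show ?thesis
      unfolding bound_Suc using True \<open>\<exists>r\<in>{1..Suc k}. bad r\<close> by (cases "bad (Suc k)") auto
  next
    case False
    then have "d = 0" "B = 0"
      using assms(1,4) divergence_bound_no_bad[OF False] by (auto simp: B_def intro!: sum.neutral)
    show ?thesis
    proof (cases "bad (Suc k)")
      case False
      then show ?thesis
        using good_zero \<open>d = 0\<close> assms(3) by (simp add: divergence_bound_nonneg)
    next
      case True
      have "c (Suc k) \<le> sqrt (A + (c (Suc k))\<^sup>2)"
        using \<open>0 \<le> A\<close> by (simp add: real_le_rsqrt)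
      then show ?thesis unfolding bound_Suc
        using any True \<open>d = 0\<close> \<open>B = 0\<close> \<open>\<not> (\<exists>r\<in>{1..k}. bad r)\<close> by auto
    qed
  qed
qed

lemma perturbed_recurrence_le_divergence_bound:
  fixes \<delta> c :: "nat \<Rightarrow> real" and bad :: "nat \<Rightarrow> bool"
  assumes "\<delta> 0 = 0" "\<And>k. 0 \<le> \<delta> k" "\<forall>s\<in>{1..m}. 0 \<le> c s"
    and "\<And>k. k < m \<Longrightarrow> \<not> bad (Suc k) \<Longrightarrow> \<delta> k = 0 \<Longrightarrow> \<delta> (Suc k) = 0"
    and "\<And>k. k < m \<Longrightarrow> \<not> bad (Suc k) \<Longrightarrow> (\<delta> (Suc k))\<^sup>2 \<le> (\<delta> k)\<^sup>2 + (c (Suc k))\<^sup>2"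
    and "\<And>k. k < m \<Longrightarrow> \<delta> (Suc k) \<le> \<delta> k + c (Suc k)"
  shows "k \<le> m \<Longrightarrow> \<delta> k \<le> divergence_bound bad c k"
proof (induction k)
  case 0
  then show ?case using assms(1) by (simp add: divergence_bound_def)
next
  case (Suc k)
  then have "k < m" by simp
  show ?case
    by (rule divergence_bound_step[of "\<delta> k"]) (use Suc \<open>k < m\<close> assms in auto)
qed

lemma rsgd_iter_in_set:
  assumes "closed X" "x1 \<in> X"
  shows "rsgd_iter X g \<eta> x1 S idx k \<in> X"
  using assms closest_point_in_set[of X] by (cases k) (auto simp: proj_set_eq_closest_point)

lemma rsgd_iter_dist_le:
  fixes X :: "'a::euclidean_space set"
  assumes "closed X" "convex X" "x1 \<in> X"
    and grad_bound: "\<And>x z. x \<in> X \<Longrightarrow> norm (g x z) \<le> L"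
    and grad_mono: "\<And>x y z. x \<in> X \<Longrightarrow> y \<in> X \<Longrightarrow> 0 \<le> (g x z - g y z) \<bullet> (x - y)"
    and "\<forall>s\<in>{1..m}. 0 \<le> \<eta> s" "k \<le> m"
  shows "norm (rsgd_iter X g \<eta> x1 S idx k - rsgd_iter X g \<eta> x1 S' idx k)
    \<le> divergence_bound (\<lambda>s. S (idx s) \<noteq> S' (idx s)) (\<lambda>s. 2 * L * \<eta> s) m"
proof -
  define x where "x k = rsgd_iter X g \<eta> x1 S idx k" for k
  define x' where "x' k = rsgd_iter X g \<eta> x1 S' idx k" for k
  define bad where "bad s \<longleftrightarrow> S (idx s) \<noteq> S' (idx s)" for s
  define c where "c s = 2 * L * \<eta> s" for s
  have in_X: "x k \<in> X" "x' k \<in> X" for k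
    unfolding x_def x'_def using assms(1,3) by (rule rsgd_iter_in_set)+
  have "0 \<le> L" using grad_bound[OF assms(3)] norm_ge_zero order_trans by blast
  then have c_nonneg: "\<forall>s\<in>{1..m}. 0 \<le> c s" using assms(6) by (simp add: c_def)
  have proj_nonexpansive: "norm (proj_set X a - proj_set X b) \<le> norm (a - b)" for a b
    using closest_point_lipschitz[OF assms(2,1)] assms(3)
    by (auto simp: proj_set_eq_closest_point dist_norm)
  have step: "norm (x (Suc k) - x' (Suc k))
      \<le> norm ((x k - \<eta> (Suc k) *\<^sub>R g (x k) (S (idx (Suc k))))
              - (x' k - \<eta> (Suc k) *\<^sub>R g (x' k) (S' (idx (Suc k)))))" for k
    unfolding x_def x'_def by (simp add: proj_nonexpansive)
  have "norm (x k - x' k) \<le> divergence_bound bad c k"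
  proof (rule perturbed_recurrence_le_divergence_bound[OF _ _ c_nonneg _ _ _ assms(7)])
    show "norm (x 0 - x' 0) = 0" by (simp add: x_def x'_def)
  next
    fix k assume "k < m" "\<not> bad (Suc k)"
    then have same: "S' (idx (Suc k)) = S (idx (Suc k))" by (simp add: bad_def)
    show "norm (x k - x' k) = 0 \<Longrightarrow> norm (x (Suc k) - x' (Suc k)) = 0"
      using step[of k] by (simp add: same)
    have "(norm (x (Suc k) - x' (Suc k)))\<^sup>2
        \<le> (norm ((x k - \<eta> (Suc k) *\<^sub>R g (x k) (S (idx (Suc k))))
                 - (x' k - \<eta> (Suc k) *\<^sub>R g (x' k) (S (idx (Suc k))))))\<^sup>2"
      using step[of k] by (simp add: same power_mono)
    also have "\<dots> \<le> (norm (x k - x' k))\<^sup>2 + (c (Suc k))\<^sup>2"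
      unfolding c_def using \<open>k < m\<close> assms(6)
      by (intro norm_gradient_steps_monotone_le grad_bound grad_mono in_X) auto
    finally show "(norm (x (Suc k) - x' (Suc k)))\<^sup>2 \<le> (norm (x k - x' k))\<^sup>2 + (c (Suc k))\<^sup>2" .
  next
    fix k assume "k < m"
    then have "0 \<le> \<eta> (Suc k)" using assms(6) by simp
    then show "norm (x (Suc k) - x' (Suc k)) \<le> norm (x k - x' k) + c (Suc k)"
      unfolding c_def
      by (rule order_trans[OF step norm_gradient_steps_le[OF grad_bound grad_bound, OF in_X]])
  qed simp
  also have "\<dots> \<le> divergence_bound bad c m"
    using assms(7) c_nonneg by (rule divergence_bound_mono)
  finally show ?thesis unfolding x_def x'_def bad_def c_def .
qed

lemma norm_weighted_average_le:
  fixes x :: "'b \<Rightarrow> 'a::real_normed_vector"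
  assumes "finite A" "\<And>t. t \<in> A \<Longrightarrow> 0 \<le> w t" "0 < sum w A" "\<And>t. t \<in> A \<Longrightarrow> norm (x t) \<le> B"
  shows "norm ((1 / sum w A) *\<^sub>R (\<Sum>t\<in>A. w t *\<^sub>R x t)) \<le> B"
proof -
  have "norm (\<Sum>t\<in>A. w t *\<^sub>R x t) \<le> (\<Sum>t\<in>A. w t * B)"
    using assms(2,4) by (intro order_trans[OF norm_sum sum_mono]) (simp add: mult_left_mono)
  also have "\<dots> = sum w A * B" by (simp add: sum_distrib_right)
  finally show ?thesis using assms(3) by (simp add: field_simps)
qed

lemma rsgd_out_norm_le:
  assumes "closed X" "X \<subseteq> cball 0 R" "x1 \<in> X" "1 \<le> T" "\<And>t. t \<in> {1..T} \<Longrightarrow> \<eta> t > 0"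
  shows "norm (rsgd_out X g \<eta> x1 T S idx) \<le> R"
  unfolding rsgd_out_def
proof (rule norm_weighted_average_le)
  show "0 < sum \<eta> {1..T}" using assms(4,5) by (intro sum_pos) auto
  show "norm (rsgd_iter X g \<eta> x1 S idx (t - 1)) \<le> R" for t
    using rsgd_iter_in_set[OF assms(1,3), of g \<eta> S idx "t - 1"] assms(2) by auto
qed (use assms(5) in \<open>auto intro: less_imp_le\<close>)

lemma rsgd_out_dist_le_diameter:
  assumes "closed X" "X \<subseteq> cball 0 R" "x1 \<in> X" "1 \<le> T" "\<And>t. t \<in> {1..T} \<Longrightarrow> \<eta> t > 0"
  shows "norm (rsgd_out X g \<eta> x1 T S idx - rsgd_out X g \<eta> x1 T S' idx) \<le> 2 * R"
proof -
  have "norm (rsgd_out X g \<eta> x1 T SS idx) \<le> R" for SS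
    using assms by (rule rsgd_out_norm_le)
  then show ?thesis
    using norm_triangle_ineq4[of "rsgd_out X g \<eta> x1 T S idx" "rsgd_out X g \<eta> x1 T S' idx"]
    by (smt (verit))
qed

lemma rsgd_out_dist_le:
  fixes X :: "'a::euclidean_space set"
  assumes "closed X" "convex X" "x1 \<in> X"
    and "\<And>x z. x \<in> X \<Longrightarrow> norm (g x z) \<le> L"
    and "\<And>x y z. x \<in> X \<Longrightarrow> y \<in> X \<Longrightarrow> 0 \<le> (g x z - g y z) \<bullet> (x - y)"
    and "1 \<le> T" "\<And>t. t \<in> {1..T} \<Longrightarrow> \<eta> t > 0"
  shows "norm (rsgd_out X g \<eta> x1 T S idx - rsgd_out X g \<eta> x1 T S' idx)
    \<le> divergence_bound (\<lambda>s. S (idx s) \<noteq> S' (idx s)) (\<lambda>s. 2 * L * \<eta> s) (T - 1)"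
proof -
  have "rsgd_out X g \<eta> x1 T S idx - rsgd_out X g \<eta> x1 T S' idx
      = (1 / sum \<eta> {1..T}) *\<^sub>R (\<Sum>t=1..T. \<eta> t *\<^sub>R
          (rsgd_iter X g \<eta> x1 S idx (t - 1) - rsgd_iter X g \<eta> x1 S' idx (t - 1)))"
    by (simp add: rsgd_out_def sum_subtractf scaleR_diff_right)
  also have "norm \<dots> \<le> divergence_bound (\<lambda>s. S (idx s) \<noteq> S' (idx s)) (\<lambda>s. 2 * L * \<eta> s) (T - 1)"
  proof (rule norm_weighted_average_le)
    show "0 < sum \<eta> {1..T}" using assms(6,7) by (intro sum_pos) auto
    show "norm (rsgd_iter X g \<eta> x1 S idx (t - 1) - rsgd_iter X g \<eta> x1 S' idx (t - 1))
        \<le> divergence_bound (\<lambda>s. S (idx s) \<noteq> S' (idx s)) (\<lambda>s. 2 * L * \<eta> s) (T - 1)"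
      if "t \<in> {1..T}" for t
      using that assms(7) by (intro rsgd_iter_dist_le[OF assms(1-5)]) (auto simp: less_imp_le)
  qed (use assms(7) in \<open>auto intro: less_imp_le\<close>)
  finally show ?thesis .
qed

lemma of_bool_bex_le_sum:
  assumes "finite A"
  shows "(of_bool (\<exists>r\<in>A. P r) :: real) \<le> (\<Sum>r\<in>A. of_bool (P r))"
proof (cases "\<exists>r\<in>A. P r")
  case True
  then obtain r where "r \<in> A" "P r" by blast
  then have "(of_bool (P r) :: real) \<le> (\<Sum>r\<in>A. of_bool (P r))"
    using assms by (intro member_le_sum) auto
  then show ?thesis using \<open>P r\<close> by simp
qed (simp add: sum_nonneg)

lemma sum_PiE_of_bool_all_in:
  assumes "finite I" "J \<subseteq> I"
  shows "(\<Sum>idx\<in>PiE I (\<lambda>_. {..<n}). of_bool (\<forall>j\<in>J. P (idx j)) :: real)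
    = real (card {i. i < n \<and> P i}) ^ card J * real n ^ (card I - card J)"
proof -
  define D where "D = {i. i < n \<and> P i}"
  have "PiE I (\<lambda>_. {..<n}) \<inter> {idx. \<forall>j\<in>J. P (idx j)} = PiE I (\<lambda>i. if i \<in> J then D else {..<n})"
    using assms(2) by (auto simp: PiE_def Pi_def D_def)
  moreover have "card (PiE I (\<lambda>i. if i \<in> J then D else {..<n})) = card D ^ card J * n ^ card (I - J)"
    using assms prod.If_cases[OF assms(1), of "\<lambda>i. i \<in> J" "\<lambda>_. card D" "\<lambda>_. n"]
    by (simp add: card_PiE if_distrib Int_absorb1 Diff_eq cong: if_cong)
  ultimately show ?thesis
    using assms by (simp add: sum_of_bool_eq finite_PiE card_Diff_subset finite_subset D_def)
qed

lemma idx_expect_mono: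
  assumes "\<And>idx. idx \<in> PiE {1..<T} (\<lambda>_. {..<n}) \<Longrightarrow> h idx \<le> h' idx"
  shows "idx_expect n T h \<le> idx_expect n T h'"
  unfolding idx_expect_def using assms by (intro divide_right_mono sum_mono) auto

lemma idx_expect_const: "0 < n \<Longrightarrow> idx_expect n T (\<lambda>_. c) = c"
  by (simp add: idx_expect_def card_PiE)

lemma idx_expect_add: "idx_expect n T (\<lambda>idx. h idx + h' idx) = idx_expect n T h + idx_expect n T h'"
  by (simp add: idx_expect_def sum.distrib add_divide_distrib)

lemma idx_expect_mult_right: "idx_expect n T (\<lambda>idx. h idx * c) = idx_expect n T h * c"
  by (simp add: idx_expect_def sum_distrib_right)

lemma idx_expect_sum: "idx_expect n T (\<lambda>idx. \<Sum>s\<in>A. h s idx) = (\<Sum>s\<in>A. idx_expect n T (h s))"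
  by (simp add: idx_expect_def sum.swap[of _ A] sum_divide_distrib)

lemma idx_expect_of_bool_all_in:
  assumes "J \<subseteq> {1..<T}" "0 < n"
  shows "idx_expect n T (\<lambda>idx. of_bool (\<forall>j\<in>J. P (idx j))) = (real (card {i. i < n \<and> P i}) / n) ^ card J"
proof -
  have "card J \<le> T - 1" using card_mono[OF _ assms(1)] by simp
  then have "real n ^ (T - 1) = real n ^ (T - 1 - card J) * real n ^ card J"
    by (metis le_add_diff_inverse2 power_add)
  then show ?thesis
    using assms by (simp add: idx_expect_def sum_PiE_of_bool_all_in power_divide)
qed

lemma idx_expect_any_hit_le:
  assumes "card {i. i < n \<and> P i} \<le> 1" "0 < n"
  shows "idx_expect n T (\<lambda>idx. of_bool (\<exists>r\<in>{1..<T}. P (idx r))) \<le> real (T - 1) / n"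
proof -
  have "idx_expect n T (\<lambda>idx. of_bool (\<exists>r\<in>{1..<T}. P (idx r)))
      \<le> (\<Sum>r\<in>{1..<T}. idx_expect n T (\<lambda>idx. of_bool (P (idx r))))"
    unfolding idx_expect_sum[symmetric] by (rule idx_expect_mono, rule of_bool_bex_le_sum) simp
  also have "\<dots> \<le> (\<Sum>r\<in>{1..<T}. 1 / real n)"
  proof (rule sum_mono)
    fix r assume "r \<in> {1..<T}"
    then show "idx_expect n T (\<lambda>idx. of_bool (P (idx r))) \<le> 1 / real n"
      using idx_expect_of_bool_all_in[of "{r}" T n P] assms by (simp add: divide_right_mono)
  qed
  finally show ?thesis by simp
qed

lemma idx_expect_repeated_hit_le:
  assumes "card {i. i < n \<and> P i} \<le> 1" "0 < n" "s \<in> {1..<T}"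
  shows "idx_expect n T (\<lambda>idx. of_bool (P (idx s) \<and> (\<exists>r\<in>{1..<s}. P (idx r))))
    \<le> real (s - 1) / real n ^ 2"
proof -
  have "idx_expect n T (\<lambda>idx. of_bool (P (idx s) \<and> (\<exists>r\<in>{1..<s}. P (idx r))))
      \<le> (\<Sum>r\<in>{1..<s}. idx_expect n T (\<lambda>idx. of_bool (P (idx r) \<and> P (idx s))))"
    unfolding idx_expect_sum[symmetric]
  proof (rule idx_expect_mono)
    fix idx :: "nat \<Rightarrow> nat"
    have "P (idx s) \<and> (\<exists>r\<in>{1..<s}. P (idx r)) \<longleftrightarrow> (\<exists>r\<in>{1..<s}. P (idx r) \<and> P (idx s))"
      by blast
    then show "of_bool (P (idx s) \<and> (\<exists>r\<in>{1..<s}. P (idx r)))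
        \<le> (\<Sum>r\<in>{1..<s}. of_bool (P (idx r) \<and> P (idx s)) :: real)"
      using of_bool_bex_le_sum[of "{1..<s}" "\<lambda>r. P (idx r) \<and> P (idx s)"] by simp
  qed
  also have "\<dots> \<le> (\<Sum>r\<in>{1..<s}. 1 / real n ^ 2)"
  proof (rule sum_mono)
    fix r assume "r \<in> {1..<s}"
    then have "{r, s} \<subseteq> {1..<T}" "card {r, s} = 2" using assms(3) by auto
    then show "idx_expect n T (\<lambda>idx. of_bool (P (idx r) \<and> P (idx s))) \<le> 1 / real n ^ 2"
      using idx_expect_of_bool_all_in[of "{r, s}" T n P] assms(1,2)
      by (simp add: power_divide divide_right_mono power_le_one)
  qed
  finally show ?thesis by simp
qed

lemma idx_expect_divergence_bound_le:
  assumes "card {i. i < n \<and> P i} \<le> 1" "0 < n" "\<forall>s\<in>{1..<T}. 0 \<le> c s"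
  shows "idx_expect n T (\<lambda>idx. divergence_bound (\<lambda>s. P (idx s)) c (T - 1))
    \<le> real (T - 1) / real n * (sqrt (\<Sum>s=1..T-1. (c s)\<^sup>2) + 1 / real n * (\<Sum>s=1..T-1. c s))"
proof -
  have indices: "{1..T - 1} = {1..<T}" by auto
  have "idx_expect n T (\<lambda>idx. divergence_bound (\<lambda>s. P (idx s)) c (T - 1))
      = idx_expect n T (\<lambda>idx. of_bool (\<exists>r\<in>{1..<T}. P (idx r))) * sqrt (\<Sum>s\<in>{1..<T}. (c s)\<^sup>2)
        + (\<Sum>s\<in>{1..<T}. idx_expect n T (\<lambda>idx. of_bool (P (idx s) \<and> (\<exists>r\<in>{1..<s}. P (idx r)))) * c s)"
    unfolding divergence_bound_def indices idx_expect_add idx_expect_mult_right idx_expect_sum ..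
  also have "\<dots> \<le> real (T - 1) / real n * sqrt (\<Sum>s\<in>{1..<T}. (c s)\<^sup>2)
        + (\<Sum>s\<in>{1..<T}. real (T - 1) / real n ^ 2 * c s)"
  proof (intro add_mono sum_mono mult_right_mono)
    show "idx_expect n T (\<lambda>idx. of_bool (\<exists>r\<in>{1..<T}. P (idx r))) \<le> real (T - 1) / real n"
      using assms(1,2) by (rule idx_expect_any_hit_le)
    fix s assume "s \<in> {1..<T}"
    then have "real (s - 1) / real n ^ 2 \<le> real (T - 1) / real n ^ 2"
      by (intro divide_right_mono) auto
    then show "idx_expect n T (\<lambda>idx. of_bool (P (idx s) \<and> (\<exists>r\<in>{1..<s}. P (idx r))))
        \<le> real (T - 1) / real n ^ 2"
      using idx_expect_repeated_hit_le[OF assms(1,2) \<open>s \<in> {1..<T}\<close>] by linarith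
    show "0 \<le> c s" using assms(3) \<open>s \<in> {1..<T}\<close> by blast
  qed (simp add: sum_nonneg)
  also have "\<dots> = real (T - 1) / real n * (sqrt (\<Sum>s=1..T-1. (c s)\<^sup>2) + 1 / real n * (\<Sum>s=1..T-1. c s))"
    unfolding indices sum_distrib_left[symmetric] by (simp add: distrib_left power2_eq_square)
  finally show ?thesis .
qed

theorem theoremA1:
  fixes X :: "'a::euclidean_space set" and R L :: real
    and f :: "'a \<Rightarrow> 'z \<Rightarrow> real" and g :: "'a \<Rightarrow> 'z \<Rightarrow> 'a"
    and U :: "'z \<Rightarrow> 'a set"
    and \<eta> :: "nat \<Rightarrow> real" and x1 :: 'a and n T :: nat and S S' :: "nat \<Rightarrow> 'z"
  assumes "compact X" and "convex X" and "X \<subseteq> cball 0 R"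
    and "\<And>z. open (U z)" and "\<And>z. X \<subseteq> U z"
    and "\<And>z. convex_on (U z) (\<lambda>x. f x z)"
    and "\<And>z. L-lipschitz_on (U z) (\<lambda>x. f x z)"
    and "\<And>x z. x \<in> X \<Longrightarrow> \<forall>y\<in>U z. f y z \<ge> f x z + g x z \<bullet> (y - x)"
    and "x1 \<in> X"
    and "1 \<le> T" and "T \<le> n"
    and "\<And>t. t \<in> {1..T} \<Longrightarrow> \<eta> t > 0"
    and "neighbors n S S'"
  shows "idx_expect n T (\<lambda>idx. norm (rsgd_out X g \<eta> x1 T S idx - rsgd_out X g \<eta> x1 T S' idx))
    \<le> min (2 * R)
         (3 * L * (real (T - 1) / real n) *
           (sqrt (\<Sum>t=1..T-1. (\<eta> t)\<^sup>2) + (1 / real n) * (\<Sum>t=1..T-1. \<eta> t)))"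
proof -
  let ?E = "idx_expect n T (\<lambda>idx. norm (rsgd_out X g \<eta> x1 T S idx - rsgd_out X g \<eta> x1 T S' idx))"
  have "closed X" using assms(1) by (rule compact_imp_closed)
  have "0 < n" using assms(10,11) by simp
  have "0 \<le> L" using assms(7) by (rule lipschitz_on_nonneg)
  have "0 \<le> (\<Sum>t=1..T-1. \<eta> t)" by (intro sum_nonneg less_imp_le assms(12)) auto
  have grad_bound: "norm (g x z) \<le> L" if "x \<in> X" for x z
    using subgradient_norm_le_lipschitz[OF assms(4) _ assms(7) assms(8)] that assms(5) by blast
  have grad_mono: "0 \<le> (g x z - g y z) \<bullet> (x - y)" if "x \<in> X" "y \<in> X" for x y z
    using subgradient_monotone[of "\<lambda>x. f x z"] assms(5,8) that by blast
  have "?E \<le> idx_expect n T (\<lambda>_. 2 * R)"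
    by (intro idx_expect_mono rsgd_out_dist_le_diameter[OF \<open>closed X\<close> assms(3,9,10,12)])
  then have diameter_bound: "?E \<le> 2 * R" using \<open>0 < n\<close> by (simp add: idx_expect_const)
  have "?E \<le> idx_expect n T (\<lambda>idx.
      divergence_bound (\<lambda>s. S (idx s) \<noteq> S' (idx s)) (\<lambda>s. 2 * L * \<eta> s) (T - 1))"
    by (intro idx_expect_mono rsgd_out_dist_le[OF \<open>closed X\<close> assms(2,9) grad_bound grad_mono assms(10,12)])
  also have "\<dots> \<le> real (T - 1) / real n *
      (sqrt (\<Sum>s=1..T-1. (2 * L * \<eta> s)\<^sup>2) + 1 / real n * (\<Sum>s=1..T-1. 2 * L * \<eta> s))"
    using assms(12,13) \<open>0 < n\<close> \<open>0 \<le> L\<close>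
    by (intro idx_expect_divergence_bound_le) (auto simp: neighbors_def less_imp_le)
  also have "\<dots> = 2 * L * (real (T - 1) / real n) *
      (sqrt (\<Sum>t=1..T-1. (\<eta> t)\<^sup>2) + 1 / real n * (\<Sum>t=1..T-1. \<eta> t))"
    using \<open>0 \<le> L\<close> by (simp add: power_mult_distrib real_sqrt_mult flip: sum_distrib_left) (simp add: algebra_simps)
  also have "\<dots> \<le> 3 * L * (real (T - 1) / real n) *
      (sqrt (\<Sum>t=1..T-1. (\<eta> t)\<^sup>2) + 1 / real n * (\<Sum>t=1..T-1. \<eta> t))"
    using \<open>0 \<le> L\<close> \<open>0 \<le> (\<Sum>t=1..T-1. \<eta> t)\<close>
    by (intro mult_right_mono add_nonneg_nonneg mult_nonneg_nonneg) (auto simp: sum_nonneg)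
  finally show ?thesis using diameter_bound by simp
qed

end
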